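(* Let $N\ge1$, $K>0$, $r_1,\dots,r_N>0$, let $(\mu_{ij})$ be a nonnegative, symmetric, irreducible $N\times N$ matrix, and let $\bar v$ be the unique positive stationary solution of $$\frac{dv_i}{dt}=v_i\left[r_i-\frac{1}{K}\sum_{j=1}^Nr_jv_j\right]+\sum_{j=1}^N\mu_{ij}(v_j-v_i),\qquad i=1,\dots,N.$$ Let $\bar v^\perp=\{h\in\mathbb{R}^N:\sum_ih_i\bar v_i=0\}$ and $\mathcal{E}(h)=\sum_ih_i^2$. Then there exists $C_1>0$ such that for all $h\in\bar v^\perp$, $$C_1\mathcal{E}(h)\le\sum_{i,j=1}^N\mu_{ij}\bar v_i\bar v_j\left(\frac{h_i}{\bar v_i}-\frac{h_j}{\bar v_j}\right)^2.$$ Moreover, this holds with $C_1=\lambda_2$, where $\lambda_2$ is the smallest strictly positive eigenvalue $\lambda$ of the linear eigenvalue problem $$h_i\sum_{j=1}^N\mu_{ij}\frac{\bar v_j}{\bar v_i}-\sum_{j=1}^N\mu_{ij}h_j=\lambda h_i,\qquad i=1,\dots,N.$$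
   Context: A stationary solution is a vector at which the right-hand side vanishes for every $i$; positive means all components strictly positive. *)

theory Defs
  imports "HOL-Analysis.Analysis"
begin

text \<open>Indices are the elements of a finite type 'n, so N = CARD('n) \<ge> 1.\<close>

text \<open>Irreducible square matrix: there is no nonempty proper index set I with
  \<mu> i j = 0 for all i \<in> I, j \<notin> I (equivalently, no permutation brings the
  matrix into block upper triangular form).\<close>
definition irreducible_mat :: "real^'n^'n \<Rightarrow> bool" where
  "irreducible_mat \<mu> \<longleftrightarrow>
     (\<forall>I :: 'n set. I \<noteq> {} \<and> I \<noteq> UNIV \<longrightarrow> (\<exists>i\<in>I. \<exists>j. j \<notin> I \<and> \<mu>$i$j \<noteq> 0))"

definition stationary :: "real \<Rightarrow> real^'n \<Rightarrow> real^'n^'n \<Rightarrow> real^'n \<Rightarrow> bool" where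
  "stationary K r \<mu> v \<longleftrightarrow>
     (\<forall>i. v$i * (r$i - (1/K) * (\<Sum>j\<in>UNIV. r$j * v$j)) + (\<Sum>j\<in>UNIV. \<mu>$i$j * (v$j - v$i)) = 0)"

definition eig_op :: "real^'n^'n \<Rightarrow> real^'n \<Rightarrow> real^'n \<Rightarrow> real^'n" where
  "eig_op \<mu> v h = (\<chi> i. h$i * (\<Sum>j\<in>UNIV. \<mu>$i$j * (v$j / v$i)) - (\<Sum>j\<in>UNIV. \<mu>$i$j * h$j))"

definition is_eigenvalue :: "real^'n^'n \<Rightarrow> real^'n \<Rightarrow> real \<Rightarrow> bool" where
  "is_eigenvalue \<mu> v lam \<longleftrightarrow> (\<exists>h. h \<noteq> 0 \<and> eig_op \<mu> v h = lam *\<^sub>R h)"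

definition smallest_pos_eigenvalue :: "real^'n^'n \<Rightarrow> real^'n \<Rightarrow> real \<Rightarrow> bool" where
  "smallest_pos_eigenvalue \<mu> v lam2 \<longleftrightarrow>
     lam2 > 0 \<and> is_eigenvalue \<mu> v lam2 \<and> (\<forall>lam. lam > 0 \<and> is_eigenvalue \<mu> v lam \<longrightarrow> lam2 \<le> lam)"

definition energy :: "real^'n \<Rightarrow> real" where
  "energy h = (\<Sum>i\<in>UNIV. (h$i)\<^sup>2)"

definition dirichlet :: "real^'n^'n \<Rightarrow> real^'n \<Rightarrow> real^'n \<Rightarrow> real" where
  "dirichlet \<mu> v h = (\<Sum>i\<in>UNIV. \<Sum>j\<in>UNIV. \<mu>$i$j * v$i * v$j * (h$i / v$i - h$j / v$j)\<^sup>2)"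

end

theory Submission
  imports Defs
begin

text \<open>The Dirichlet form is twice the quadratic form of the operator \<open>A = eig_op \<mu> v\<close>,
  which is self-adjoint by the symmetry of \<open>\<mu>\<close> and annihilates \<open>v\<close>; hence \<open>A\<close> leaves the
  hyperplane \<open>v\<^sup>\<perp>\<close> invariant. By compactness the Rayleigh quotient of \<open>A\<close> attains its minimum
  \<open>\<lambda>\<close> on \<open>v\<^sup>\<perp>\<close>, and the minimiser is an eigenvector for \<open>\<lambda>\<close>. Irreducibility forces the Dirichlet
  form to vanish only on multiples of \<open>v\<close>, so \<open>\<lambda> > 0\<close>; thus \<open>\<lambda>\<close> is a positive eigenvalue,
  it bounds the smallest one from above, and it is a valid constant \<open>C\<^sub>1\<close>.\<close>

lemma linear_coeff_eq_0_if_quadratic_nonneg: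
  fixes a b :: real
  assumes nonneg: "\<And>t. 0 \<le> a * t + b * t\<^sup>2"
  shows "a = 0"
proof (rule ccontr)
  assume "a \<noteq> 0"
  define c where "c = \<bar>b\<bar> + 1"
  define t where "t = - a / (2 * c)"
  have c: "c > 0"
    by (simp add: c_def add_nonneg_pos)
  have "b * t\<^sup>2 \<le> c * t\<^sup>2"
    unfolding c_def by (intro mult_right_mono) auto
  also have "\<dots> = - a * t / 2"
    using c by (simp add: t_def power2_eq_square field_simps)
  finally have "a * t + b * t\<^sup>2 \<le> a * t / 2"
    by simp
  also have "a * t / 2 < 0"
    using \<open>a \<noteq> 0\<close> c by (simp add: t_def divide_simps flip: power2_eq_square)
  finally show False
    using nonneg by (meson not_le)
qed

lemma self_adjoint_eigenvector_if_rayleigh_min: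
  fixes A :: "'a::real_inner \<Rightarrow> 'a"
  assumes lin: "linear A" and adj: "\<And>x y. inner (A x) y = inner x (A y)"
    and S: "subspace S" "A ` S \<subseteq> S" and x: "x \<in> S"
    and min: "\<And>h. h \<in> S \<Longrightarrow> lam * inner h h \<le> inner (A h) h"
    and attained: "inner (A x) x = lam * inner x x"
  shows "A x = lam *\<^sub>R x"
proof -
  define Q where "Q h = inner (A h) h - lam * inner h h" for h
  define w where "w = A x - lam *\<^sub>R x"
  have w: "w \<in> S"
    unfolding w_def using S x by (blast intro: subspace_diff subspace_scale)
  have Q_x: "Q x = 0"
    by (simp add: Q_def attained)
  \<comment> \<open>\<open>Q \<ge> 0\<close> on \<open>S\<close> and \<open>Q x = 0\<close>, so along \<open>x + t w\<close> the linear coefficient \<open>2 \<parallel>w\<parallel>\<^sup>2\<close> must vanish.\<close>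
  have "0 \<le> 2 * inner w w * t + Q w * t\<^sup>2" for t
  proof -
    have "x + t *\<^sub>R w \<in> S"
      using S x w by (blast intro: subspace_add subspace_scale)
    then have "0 \<le> Q (x + t *\<^sub>R w)"
      using min by (simp add: Q_def)
    also have "\<dots> = Q x + 2 * t * inner (A x - lam *\<^sub>R x) w + t\<^sup>2 * Q w"
      using adj[of x w] inner_commute[of "A w" x] inner_commute[of x w]
      by (simp add: Q_def linear_add[OF lin] linear_scale[OF lin] inner_add_left inner_add_right
          inner_diff_left power2_eq_square algebra_simps)
    finally show ?thesis
      by (simp add: Q_x w_def[symmetric] algebra_simps)
  qed
  then have "2 * inner w w = 0"
    by (rule linear_coeff_eq_0_if_quadratic_nonneg)
  then show ?thesis
    by (simp add: w_def)
qed

lemma self_adjoint_min_eigenpair: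
  fixes A :: "'a::euclidean_space \<Rightarrow> 'a"
  assumes lin: "linear A" and adj: "\<And>x y. inner (A x) y = inner x (A y)"
    and S: "subspace S" "A ` S \<subseteq> S" and nontrivial: "S \<noteq> {0}"
  obtains x lam where "x \<in> S" "x \<noteq> 0" "A x = lam *\<^sub>R x"
    "\<And>h. h \<in> S \<Longrightarrow> lam * inner h h \<le> inner (A h) h"
proof -
  define U where "U = S \<inter> sphere 0 1"
  have "compact U"
    unfolding U_def using S by (intro closed_Int_compact closed_subspace compact_sphere)
  obtain y where "y \<in> S" "y \<noteq> 0"
    using nontrivial subspace_0[OF S(1)] by blast
  then have "y /\<^sub>R norm y \<in> U"
    unfolding U_def using S by (simp add: subspace_scale)
  then have "U \<noteq> {}"
    by blast
  have "bounded_linear A"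
    using lin by (simp add: linear_conv_bounded_linear)
  then have "continuous_on U (\<lambda>h. inner (A h) h)"
    by (intro continuous_on_inner linear_continuous_on continuous_on_id)
  from continuous_attains_inf[OF \<open>compact U\<close> \<open>U \<noteq> {}\<close> this]
  obtain x where x: "x \<in> U" and xmin: "\<And>u. u \<in> U \<Longrightarrow> inner (A x) x \<le> inner (A u) u"
    by blast
  define lam where "lam = inner (A x) x"
  have x1: "inner x x = 1"
    using x by (simp add: U_def dot_square_norm)
  have min: "lam * inner h h \<le> inner (A h) h" if "h \<in> S" for h
  proof (cases "h = 0")
    case False
    then have "h /\<^sub>R norm h \<in> U"
      unfolding U_def using S that by (simp add: subspace_scale)
    from xmin[OF this] have "lam \<le> inner (A h) h / inner h h"
      by (simp add: lam_def linear_scale[OF lin] divide_inverse power2_norm_eq_inner[symmetric]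
          power2_eq_square ac_simps)
    with False show ?thesis
      by (simp add: pos_le_divide_eq)
  qed (simp add: linear_0[OF lin])
  have "x \<in> S" "x \<noteq> 0"
    using x x1 by (auto simp: U_def)
  moreover have "A x = lam *\<^sub>R x"
    using self_adjoint_eigenvector_if_rayleigh_min[OF lin adj S \<open>x \<in> S\<close> min] x1
    by (simp add: lam_def)
  ultimately show thesis
    using min by (rule that)
qed

lemma irreducible_mat_const:
  assumes irr: "irreducible_mat \<mu>" and edge: "\<And>i j. \<mu>$i$j \<noteq> 0 \<Longrightarrow> f i = f j"
  shows "f i = f j"
proof -
  have "{k. f k = f i} = UNIV"
  proof (rule ccontr)
    assume "{k. f k = f i} \<noteq> UNIV"
    moreover have "{k. f k = f i} \<noteq> {}"
      by blast
    ultimately obtain k l where "f k = f i" "f l \<noteq> f i" "\<mu>$k$l \<noteq> 0"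
      using irr[unfolded irreducible_mat_def, rule_format, of "{k. f k = f i}"] by auto
    then show False
      using edge[of k l] by simp
  qed
  then show ?thesis
    by (metis mem_Collect_eq UNIV_I)
qed

lemma linear_eig_op: "linear (eig_op \<mu> v)"
  by (rule linearI)
    (simp_all add: eig_op_def vec_eq_iff algebra_simps sum.distrib sum_distrib_left add_divide_distrib)

lemma inner_eig_op_commute:
  assumes sym: "\<forall>i j. \<mu>$i$j = \<mu>$j$i"
  shows "inner (eig_op \<mu> v x) y = inner x (eig_op \<mu> v y)"
proof -
  define d where "d i = (\<Sum>j\<in>UNIV. \<mu>$i$j * (v$j / v$i))" for i
  have swap: "(\<Sum>i\<in>UNIV. \<Sum>j\<in>UNIV. \<mu>$i$j * x$j * y$i) = (\<Sum>i\<in>UNIV. \<Sum>j\<in>UNIV. \<mu>$i$j * y$j * x$i)"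
    by (subst sum.swap) (simp add: sym mult.commute mult.left_commute)
  have "inner (eig_op \<mu> v x) y = (\<Sum>i\<in>UNIV. x$i * y$i * d i) - (\<Sum>i\<in>UNIV. \<Sum>j\<in>UNIV. \<mu>$i$j * x$j * y$i)"
    "inner x (eig_op \<mu> v y) = (\<Sum>i\<in>UNIV. x$i * y$i * d i) - (\<Sum>i\<in>UNIV. \<Sum>j\<in>UNIV. \<mu>$i$j * y$j * x$i)"
    by (simp_all add: eig_op_def inner_vec_def d_def algebra_simps sum_subtractf
        sum_distrib_left sum_distrib_right)
  with swap show ?thesis
    by simp
qed

lemma eig_op_self_eq_0:
  assumes pos: "\<forall>i. v$i > 0"
  shows "eig_op \<mu> v v = 0"
proof -
  have "v$i * (\<Sum>j\<in>UNIV. \<mu>$i$j * (v$j / v$i)) = (\<Sum>j\<in>UNIV. \<mu>$i$j * v$j)" for i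
    using pos[rule_format, of i] by (simp add: sum_distrib_left field_simps)
  then show ?thesis
    by (simp add: eig_op_def vec_eq_iff)
qed

lemma dirichlet_eq_inner_eig_op:
  assumes sym: "\<forall>i j. \<mu>$i$j = \<mu>$j$i" and pos: "\<forall>i. v$i > 0"
  shows "dirichlet \<mu> v h = 2 * inner (eig_op \<mu> v h) h"
proof -
  have expand: "\<mu>$i$j * v$i * v$j * (h$i / v$i - h$j / v$j)\<^sup>2 =
     \<mu>$i$j * (h$i)\<^sup>2 * (v$j / v$i) - 2 * (\<mu>$i$j * h$j * h$i) + \<mu>$i$j * (h$j)\<^sup>2 * (v$i / v$j)" for i j
    using pos[rule_format, of i] pos[rule_format, of j]
    by (simp add: field_simps power2_eq_square)
  have swap: "(\<Sum>i\<in>UNIV. \<Sum>j\<in>UNIV. \<mu>$i$j * (h$j)\<^sup>2 * (v$i / v$j)) =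
      (\<Sum>i\<in>UNIV. \<Sum>j\<in>UNIV. \<mu>$i$j * (h$i)\<^sup>2 * (v$j / v$i))"
    by (subst sum.swap) (simp add: sym)
  have "dirichlet \<mu> v h = 2 * (\<Sum>i\<in>UNIV. \<Sum>j\<in>UNIV. \<mu>$i$j * (h$i)\<^sup>2 * (v$j / v$i))
      - 2 * (\<Sum>i\<in>UNIV. \<Sum>j\<in>UNIV. \<mu>$i$j * h$j * h$i)"
    unfolding dirichlet_def expand sum.distrib sum_subtractf sum_distrib_left[symmetric] swap
    by simp
  also have "\<dots> = 2 * inner (eig_op \<mu> v h) h"
    by (simp add: eig_op_def inner_vec_def algebra_simps sum_subtractf sum_distrib_left
        sum_distrib_right power2_eq_square)
  finally show ?thesis .
qed

lemma dirichlet_term_nonneg: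
  fixes \<mu> :: "real^'n^'n" and v h :: "real^'n"
  assumes "\<forall>i j. \<mu>$i$j \<ge> 0" and "\<forall>i. v$i > 0"
  shows "0 \<le> \<mu>$i$j * v$i * v$j * (h$i / v$i - h$j / v$j)\<^sup>2"
  using assms by (intro mult_nonneg_nonneg) (auto intro: less_imp_le)

lemma dirichlet_eq_0_imp_multiple:
  assumes nn: "\<forall>i j. \<mu>$i$j \<ge> 0" and pos: "\<forall>i. v$i > 0" and irr: "irreducible_mat \<mu>"
    and zero: "dirichlet \<mu> v h = 0"
  obtains c where "h = c *\<^sub>R v"
proof -
  have term_0: "\<mu>$i$j * v$i * v$j * (h$i / v$i - h$j / v$j)\<^sup>2 = 0" for i j
    using zero dirichlet_term_nonneg[OF nn pos]
    unfolding dirichlet_def by (simp add: sum_nonneg sum_nonneg_eq_0_iff)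
  define f where "f k = h$k / v$k" for k
  have "f i = f j" if "\<mu>$i$j \<noteq> 0" for i j
    using term_0[of i j] that pos[rule_format, of i] pos[rule_format, of j] by (simp add: f_def)
  then have f_const: "f k = f i" for i k
    by (rule irreducible_mat_const[OF irr])
  have "h = f i *\<^sub>R v" for i
  proof (rule vec_eq_iff[THEN iffD2], intro allI)
    fix k
    show "h$k = (f i *\<^sub>R v)$k"
      using f_const[of k i] pos[rule_format, of k] by (simp add: f_def field_simps)
  qed
  then show thesis
    by (rule that)
qed

lemma dirichlet_pos_on_perp:
  assumes nn: "\<forall>i j. \<mu>$i$j \<ge> 0" and pos: "\<forall>i. v$i > 0" and irr: "irreducible_mat \<mu>"
    and perp: "inner h v = 0" and nonzero: "h \<noteq> 0"
  shows "dirichlet \<mu> v h > 0"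
proof -
  have "dirichlet \<mu> v h \<ge> 0"
    unfolding dirichlet_def using dirichlet_term_nonneg[OF nn pos] by (intro sum_nonneg)
  moreover have "dirichlet \<mu> v h \<noteq> 0"
  proof
    assume "dirichlet \<mu> v h = 0"
    then obtain c where h: "h = c *\<^sub>R v"
      using dirichlet_eq_0_imp_multiple[OF nn pos irr] by blast
    have "v \<noteq> 0"
      using pos by (metis less_irrefl zero_index)
    then show False
      using perp nonzero by (simp add: h)
  qed
  ultimately show ?thesis
    by simp
qed

lemma energy_eq_inner: "energy h = inner h h"
  by (simp add: energy_def inner_vec_def power2_eq_square)

theorem lemma5p3:
  fixes K :: real and r :: "real^'n" and \<mu> :: "real^'n^'n" and v :: "real^'n"
  assumes "K > 0"
    and "\<forall>i. r$i > 0"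
    and nn: "\<forall>i j. \<mu>$i$j \<ge> 0"
    and sym: "\<forall>i j. \<mu>$i$j = \<mu>$j$i"
    and irr: "irreducible_mat \<mu>"
    and pos: "\<forall>i. v$i > 0"
    and "stationary K r \<mu> v"
  shows "(\<exists>C1 > 0. \<forall>h. (\<Sum>i\<in>UNIV. h$i * v$i) = 0 \<longrightarrow> C1 * energy h \<le> dirichlet \<mu> v h)
    \<and> (\<forall>lam2. smallest_pos_eigenvalue \<mu> v lam2 \<longrightarrow>
         (\<forall>h. (\<Sum>i\<in>UNIV. h$i * v$i) = 0 \<longrightarrow> lam2 * energy h \<le> dirichlet \<mu> v h))"
proof -
  define S where "S = {h. inner h v = 0}"
  have perp_iff: "(\<Sum>i\<in>UNIV. h$i * v$i) = 0 \<longleftrightarrow> h \<in> S" for h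
    by (simp add: S_def inner_vec_def)
  have adj: "inner (eig_op \<mu> v x) y = inner x (eig_op \<mu> v y)" for x y
    using sym by (rule inner_eig_op_commute)
  have "subspace S" "eig_op \<mu> v ` S \<subseteq> S"
    using subspace_hyperplane2 by (auto simp: S_def adj eig_op_self_eq_0[OF pos])
  show ?thesis
  proof (cases "S = {0}")
    case True
    then have "c * energy h \<le> dirichlet \<mu> v h" if "h \<in> S" for c h
      using that by (simp add: energy_def dirichlet_def)
    then show ?thesis
      unfolding perp_iff using zero_less_one by blast
  next
    case False
    obtain x lam where x: "x \<in> S" "x \<noteq> 0" "eig_op \<mu> v x = lam *\<^sub>R x"
      and gap: "\<And>h. h \<in> S \<Longrightarrow> lam * inner h h \<le> inner (eig_op \<mu> v h) h"
      using self_adjoint_min_eigenpair[OF linear_eig_op adj \<open>subspace S\<close> _ False]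
        \<open>eig_op \<mu> v ` S \<subseteq> S\<close> by blast
    have "0 < dirichlet \<mu> v x"
      using dirichlet_pos_on_perp[OF nn pos irr] x by (simp add: S_def)
    then have "lam > 0"
      using x inner_ge_zero[of x] by (auto simp: dirichlet_eq_inner_eig_op[OF sym pos] zero_less_mult_iff)
    have bound: "c * energy h \<le> dirichlet \<mu> v h" if "c \<le> lam" "h \<in> S" for c h
      using mult_right_mono[OF that(1) inner_ge_zero[of h]] gap[OF that(2)]
        mult_nonneg_nonneg[OF less_imp_le[OF \<open>lam > 0\<close>] inner_ge_zero[of h]]
      by (simp add: energy_eq_inner dirichlet_eq_inner_eig_op[OF sym pos])
    have lam2_le: "lam2 \<le> lam" if "smallest_pos_eigenvalue \<mu> v lam2" for lam2
      using that x \<open>lam > 0\<close> by (auto simp: smallest_pos_eigenvalue_def is_eigenvalue_def)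
    show ?thesis
      unfolding perp_iff
    proof (intro conjI allI impI)
      show "\<exists>C1>0. \<forall>h. h \<in> S \<longrightarrow> C1 * energy h \<le> dirichlet \<mu> v h"
        using \<open>lam > 0\<close> bound[OF order_refl] by blast
    next
      fix lam2 h
      assume "smallest_pos_eigenvalue \<mu> v lam2" "h \<in> S"
      then show "lam2 * energy h \<le> dirichlet \<mu> v h"
        by (intro bound lam2_le)
    qed
  qed
qed

end
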